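(* Consider a Hamiltonian system $\dot{\mathbf x}=\mathbf L\nabla H(\mathbf x)$ on $\mathbb{R}^N$ with $H:\mathbb{R}^N\to\mathbb{R}$ differentiable and $\mathbf L\in\mathbb{R}^{N\times N}$ skew-symmetric. Let $\mathbf X\in\mathbb{R}^{N\times n_s}$ collect snapshots $\mathbf x(t_i)$ of a solution at times $t_i$ with time step $\Delta t$, let $\mathbf X_t$ collect approximations $\mathbf x_t(t_i)$ of $\dot{\mathbf x}(t_i)$, let $\nabla H(\mathbf X)\in\mathbb{R}^{N\times n_s}$ collect the gradients $\nabla H(\mathbf x(t_i))$, and let $\mathbf U\in\mathbb{R}^{N\times n}$ be a POD basis. Set $\hat{\mathbf X}_t=\mathbf U^\intercal\mathbf X_t$, $\hat\nabla H(\mathbf X)=\mathbf U^\intercal\nabla H(\mathbf X)$, and let $\hat{\mathbf L}\in\mathbb{R}^{n\times n}$ be the inferred operator \[\hat{\mathbf L}=\operatorname*{argmin}_{\mathbf M\in\mathbb{R}^{n\times n}}\|\hat{\mathbf X}_t-\mathbf M\hat\nabla H(\mathbf X)\|^2\quad\text{subject to}\quad\mathbf M^\intercal=-\mathbf M.\] Assume: (i) for every $\mathbf x\in\mathbb{R}^N$, $\lim_{n\to N}\|(\mathbf I-\mathbf U\mathbf U^\intercal)\mathbf x\|=0$; (ii) $\lim_{\Delta t\to0}\max_i\|\mathbf x_t(t_i)-\dot{\mathbf x}(t_i)\|=0$; (iii) $\mathbf X$ and $\nabla H(\mathbf X)$ have maximal rank. Then $\hat{\mathbf L}$ converges to the intrusive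 operator $\bar{\mathbf L}=\mathbf U^\intercal\mathbf L\mathbf U$ as $\Delta t\to0$ and $n\to N$.
   Context: A POD basis is a matrix $\mathbf U\in\mathbb{R}^{N\times n}$ whose columns are the first $n$ left singular vectors of a (possibly mean-centered) snapshot matrix, so $\mathbf U^\intercal\mathbf U=\mathbf I$. $\|\cdot\|$ is the Frobenius (or Euclidean) norm. Equivalently, $\hat{\mathbf L}$ is the solution of $(\mathbf I\otimes\mathbf G+\mathbf G\otimes\mathbf I)\operatorname{vec}\hat{\mathbf L}=\operatorname{vec}(\hat{\mathbf X}_t\hat\nabla H(\mathbf X)^\intercal-\hat\nabla H(\mathbf X)\hat{\mathbf X}_t^\intercal)$ with $\mathbf G=\hat\nabla H(\mathbf X)\hat\nabla H(\mathbf X)^\intercal$. *)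

theory Defs
  imports "HOL-Analysis.Analysis"
begin

text \<open>The full state space is real^'N with N = CARD('N).
  Matrices with n or n_s columns are represented column-wise by functions
  nat => real^'N (only indices below the relevant size matter); reduced
  (n x n, n x n_s) matrices are represented entrywise by nat => nat => real.\<close>

definition skew_mat :: "real^'N^'N \<Rightarrow> bool" where
  "skew_mat L \<longleftrightarrow> transpose L = - L"

text \<open>S S^T applied to a vector, where S has columns s 0, ..., s (ns-1).\<close>
definition gram_op :: "nat \<Rightarrow> (nat \<Rightarrow> real^'N) \<Rightarrow> real^'N \<Rightarrow> real^'N" where
  "gram_op ns s v = (\<Sum>i<ns. (s i \<bullet> v) *\<^sub>R s i)"

definition center :: "nat \<Rightarrow> (nat \<Rightarrow> real^'N) \<Rightarrow> nat \<Rightarrow> real^'N" where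
  "center ns s i = s i - (1 / real ns) *\<^sub>R (\<Sum>k<ns. s k)"

text \<open>U (columns U 0, ..., U (n-1)) is a POD basis of dimension n of the snapshot
  matrix S: its columns are orthonormal left singular vectors of S (i.e. orthonormal
  eigenvectors of S S^T) ordered by nonincreasing singular value, and they are the
  first n ones: every left singular vector orthogonal to them has singular value
  no larger than the n-th one.\<close>
definition pod_basis :: "nat \<Rightarrow> (nat \<Rightarrow> real^'N) \<Rightarrow> nat \<Rightarrow> (nat \<Rightarrow> real^'N) \<Rightarrow> bool" where
  "pod_basis ns S n U \<longleftrightarrow>
     (\<forall>j<n. \<forall>k<n. U j \<bullet> U k = (if j = k then 1 else 0)) \<and>
     (\<exists>ev::nat \<Rightarrow> real.
        (\<forall>j<n. gram_op ns S (U j) = ev j *\<^sub>R U j) \<and>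
        (\<forall>j k. j \<le> k \<and> k < n \<longrightarrow> ev k \<le> ev j) \<and>
        (\<forall>v \<mu>. v \<noteq> 0 \<and> gram_op ns S v = \<mu> *\<^sub>R v \<and> (\<forall>j<n. v \<bullet> U j = 0) \<and> 0 < n
              \<longrightarrow> \<mu> \<le> ev (n - 1)))"

definition oi_obj :: "nat \<Rightarrow> nat \<Rightarrow> (nat \<Rightarrow> nat \<Rightarrow> real) \<Rightarrow> (nat \<Rightarrow> nat \<Rightarrow> real)
                       \<Rightarrow> (nat \<Rightarrow> nat \<Rightarrow> real) \<Rightarrow> real" where
  "oi_obj n ns Xth Gh M = (\<Sum>i<ns. \<Sum>a<n. (Xth a i - (\<Sum>b<n. M a b * Gh b i))\<^sup>2)"

definition skew_red :: "nat \<Rightarrow> (nat \<Rightarrow> nat \<Rightarrow> real) \<Rightarrow> bool" where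
  "skew_red n M \<longleftrightarrow> (\<forall>a<n. \<forall>b<n. M b a = - M a b)"

definition frob :: "nat \<Rightarrow> (nat \<Rightarrow> nat \<Rightarrow> real) \<Rightarrow> real" where
  "frob n M = sqrt (\<Sum>a<n. \<Sum>b<n. (M a b)\<^sup>2)"

end

theory Submission
  imports Defs
begin

(*
  Since n ranges over n <= N, the limit n -> N is attained at n = N, where assumption (i)
  makes the POD basis a complete orthonormal basis. There the intrusive operator
  Lbar = U^T L U is skew, hence admissible in the constrained least-squares problem, and its
  residual is the projection of X_t - L grad H(X), i.e. of the time-derivative error.
  Full rank of Ghat = U^T grad H(X) makes M |-> M Ghat coercive, c ||M||^2 <= ||M Ghat||^2,
  so comparing residuals gives
    c ||Lhat - Lbar||^2 <= 2 (obj Lhat + obj Lbar) <= 4 obj Lbar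
                        <= 4 n_s max_i ||x_t(t_i) - x'(t_i)||^2,
  which tends to 0 with Delta t (called h in the statement).
*)

definition orthonormal_upto :: "nat \<Rightarrow> (nat \<Rightarrow> 'a::real_inner) \<Rightarrow> bool" where
  "orthonormal_upto n u \<longleftrightarrow> (\<forall>j<n. \<forall>k<n. u j \<bullet> u k = (if j = k then 1 else 0))"

lemma norm_sum_orthonormal:
  assumes "orthonormal_upto n u"
  shows "(norm (\<Sum>b<n. d b *\<^sub>R u b))\<^sup>2 = (\<Sum>b<n. (d b)\<^sup>2)"
proof -
  have "(norm (\<Sum>b<n. d b *\<^sub>R u b))\<^sup>2 = (\<Sum>b<n. \<Sum>c<n. d b * d c * (u c \<bullet> u b))"
    by (simp add: power2_norm_eq_inner inner_sum_left inner_sum_right sum_distrib_left mult.assoc)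
  also have "\<dots> = (\<Sum>b<n. \<Sum>c<n. d b * d c * (if c = b then 1 else 0))"
    using assms unfolding orthonormal_upto_def by (intro sum.cong refl) auto
  also have "\<dots> = (\<Sum>b<n. (d b)\<^sup>2)"
    by (simp add: power2_eq_square if_distrib cong: if_cong)
  finally show ?thesis .
qed

lemma sum_inner_square_orthonormal:
  assumes "orthonormal_upto n u" and "(\<Sum>j<n. (u j \<bullet> v) *\<^sub>R u j) = v"
  shows "(\<Sum>j<n. (u j \<bullet> v)\<^sup>2) = (norm v)\<^sup>2"
  using norm_sum_orthonormal[OF assms(1), of "\<lambda>j. u j \<bullet> v"] assms(2) by simp

lemma spanning_family_coercive:
  fixes g :: "'i \<Rightarrow> 'a::euclidean_space"
  assumes "finite I" and "span (g ` I) = UNIV"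
  shows "\<exists>c>0. \<forall>w. c * (norm w)\<^sup>2 \<le> (\<Sum>i\<in>I. (w \<bullet> g i)\<^sup>2)"
proof -
  define q where "q w = (\<Sum>i\<in>I. (w \<bullet> g i)\<^sup>2)" for w
  have q_nonneg: "q w \<ge> 0" for w unfolding q_def by (intro sum_nonneg) auto
  have "continuous_on (sphere 0 1) q" unfolding q_def by (intro continuous_intros)
  moreover obtain b :: 'a where "b \<in> Basis" using nonempty_Basis by blast
  then have "sphere (0::'a) 1 \<noteq> {}" by (auto intro!: exI[of _ b])
  ultimately obtain w0 where w0: "w0 \<in> sphere 0 1" "\<forall>v\<in>sphere 0 1. q w0 \<le> q v"
    using continuous_attains_inf[OF compact_sphere] by blast
  have "q w0 \<noteq> 0"
  proof
    assume "q w0 = 0"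
    then have "\<forall>v\<in>g ` I. orthogonal w0 v"
      using assms(1) unfolding q_def orthogonal_def by (auto simp: sum_nonneg_eq_0_iff)
    then have "orthogonal w0 w0" using orthogonal_to_span assms(2) by blast
    then show False using w0(1) by (auto simp: orthogonal_def)
  qed
  then have pos: "q w0 > 0" using q_nonneg[of w0] by linarith
  have "q w0 * (norm w)\<^sup>2 \<le> q w" for w
  proof (cases "w = 0")
    case True then show ?thesis by (simp add: q_nonneg)
  next
    case False
    have "q w0 \<le> q ((1 / norm w) *\<^sub>R w)" using w0(2) False by simp
    also have "\<dots> = q w / (norm w)\<^sup>2" unfolding q_def
      by (simp add: sum_divide_distrib power_divide)
    finally show ?thesis using False by (simp add: field_simps)
  qed
  then show ?thesis using pos unfolding q_def by blast
qed

lemma orthonormal_coords_coercive: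
  fixes u :: "nat \<Rightarrow> 'a::euclidean_space" and g :: "'i \<Rightarrow> 'a"
  assumes "orthonormal_upto n u" and "finite I" and "span (g ` I) = UNIV"
  shows "\<exists>c>0. \<forall>d. c * (\<Sum>b<n. (d b)\<^sup>2) \<le> (\<Sum>i\<in>I. (\<Sum>b<n. d b * (u b \<bullet> g i))\<^sup>2)"
proof -
  obtain c where c: "c > 0" "\<And>w. c * (norm w)\<^sup>2 \<le> (\<Sum>i\<in>I. (w \<bullet> g i)\<^sup>2)"
    using spanning_family_coercive[OF assms(2,3)] by blast
  have "c * (\<Sum>b<n. (d b)\<^sup>2) \<le> (\<Sum>i\<in>I. (\<Sum>b<n. d b * (u b \<bullet> g i))\<^sup>2)" for d
    using c(2)[of "\<Sum>b<n. d b *\<^sub>R u b"] norm_sum_orthonormal[OF assms(1)]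
    by (simp add: inner_sum_left)
  then show ?thesis using c(1) by blast
qed

lemma inner_skew_mat_swap:
  assumes "skew_mat L"
  shows "y \<bullet> (L *v z) = - (z \<bullet> (L *v y))"
proof -
  have "y \<bullet> (L *v z) = (transpose L *v y) \<bullet> z" by (simp add: dot_lmul_matrix[symmetric])
  also have "transpose L *v y = - (L *v y)" using assms unfolding skew_mat_def
    by (simp add: matrix_vector_mult_def vec_eq_iff sum_negf)
  finally show ?thesis by (simp add: inner_commute)
qed

lemma skew_red_projected:
  assumes "skew_mat L"
  shows "skew_red n (\<lambda>a b. u a \<bullet> (L *v u b))"
  unfolding skew_red_def using inner_skew_mat_swap[OF assms] by blast

lemma oi_obj_projected_operator:
  fixes u :: "nat \<Rightarrow> 'a::real_inner" and f :: "'a \<Rightarrow> 'a"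
  assumes orth: "orthonormal_upto n u" and "linear f"
    and expand: "\<And>v. (\<Sum>j<n. (u j \<bullet> v) *\<^sub>R u j) = v"
  shows "oi_obj n ns (\<lambda>a i. u a \<bullet> y i) (\<lambda>b i. u b \<bullet> g i) (\<lambda>a b. u a \<bullet> f (u b))
           = (\<Sum>i<ns. (norm (y i - f (g i)))\<^sup>2)"
proof -
  have apply_coords: "(\<Sum>b<n. (w \<bullet> f (u b)) * (u b \<bullet> v)) = w \<bullet> f v" for w v
  proof -
    have "w \<bullet> f v = w \<bullet> f (\<Sum>b<n. (u b \<bullet> v) *\<^sub>R u b)" by (simp add: expand)
    also have "\<dots> = (\<Sum>b<n. (w \<bullet> f (u b)) * (u b \<bullet> v))"
      by (simp add: linear_sum[OF \<open>linear f\<close>] linear_scale[OF \<open>linear f\<close>]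
          inner_sum_right mult.commute)
    finally show ?thesis ..
  qed
  have "oi_obj n ns (\<lambda>a i. u a \<bullet> y i) (\<lambda>b i. u b \<bullet> g i) (\<lambda>a b. u a \<bullet> f (u b))
          = (\<Sum>i<ns. \<Sum>a<n. (u a \<bullet> (y i - f (g i)))\<^sup>2)"
    unfolding oi_obj_def apply_coords by (simp add: inner_diff_right)
  also have "\<dots> = (\<Sum>i<ns. (norm (y i - f (g i)))\<^sup>2)"
    using sum_inner_square_orthonormal[OF orth expand] by simp
  finally show ?thesis .
qed

lemma frob_le_oi_obj_of_better_fit:
  assumes coercive: "\<And>d. c * (\<Sum>b<n. (d b)\<^sup>2) \<le> (\<Sum>i<ns. (\<Sum>b<n. d b * G b i)\<^sup>2)"
    and better: "oi_obj n ns X G M \<le> oi_obj n ns X G M0"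
  shows "c * (frob n (\<lambda>a b. M a b - M0 a b))\<^sup>2 \<le> 4 * oi_obj n ns X G M0"
proof -
  define R where "R K a i = X a i - (\<Sum>b<n. K a b * G b i)" for K a i
  have obj: "oi_obj n ns X G K = (\<Sum>i<ns. \<Sum>a<n. (R K a i)\<^sup>2)" for K
    unfolding oi_obj_def R_def ..
  have diff: "(\<Sum>b<n. (M a b - M0 a b) * G b i) = R M0 a i - R M a i" for a i
    unfolding R_def by (simp add: left_diff_distrib sum_subtractf)
  have sq_diff: "(p - q)\<^sup>2 \<le> 2 * p\<^sup>2 + 2 * q\<^sup>2" for p q :: real
    using zero_le_power2[of "p + q"] by (simp add: power2_eq_square algebra_simps)
  have "c * (frob n (\<lambda>a b. M a b - M0 a b))\<^sup>2 = (\<Sum>a<n. c * (\<Sum>b<n. (M a b - M0 a b)\<^sup>2))"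
    unfolding frob_def by (simp add: sum_nonneg sum_distrib_left)
  also have "\<dots> \<le> (\<Sum>a<n. \<Sum>i<ns. (R M0 a i - R M a i)\<^sup>2)"
  proof (intro sum_mono)
    fix a
    show "c * (\<Sum>b<n. (M a b - M0 a b)\<^sup>2) \<le> (\<Sum>i<ns. (R M0 a i - R M a i)\<^sup>2)"
      using coercive[of "\<lambda>b. M a b - M0 a b"] by (simp add: diff)
  qed
  also have "\<dots> \<le> (\<Sum>a<n. \<Sum>i<ns. 2 * (R M0 a i)\<^sup>2 + 2 * (R M a i)\<^sup>2)"
    by (intro sum_mono sq_diff)
  also have "\<dots> = 2 * oi_obj n ns X G M0 + 2 * oi_obj n ns X G M"
    unfolding obj by (subst (1 2) sum.swap) (simp add: sum.distrib sum_distrib_left)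
  also have "\<dots> \<le> 4 * oi_obj n ns X G M0"
    using better by linarith
  finally show ?thesis .
qed

lemma oi_error_le_residuals:
  fixes u g y :: "nat \<Rightarrow> real^'N" and L :: "real^'N^'N"
  assumes orth: "orthonormal_upto n u" and expand: "\<And>v. (\<Sum>j<n. (u j \<bullet> v) *\<^sub>R u j) = v"
    and skew: "skew_mat L"
    and coercive: "\<And>d. c * (\<Sum>b<n. (d b)\<^sup>2) \<le> (\<Sum>i<ns. (\<Sum>b<n. d b * (u b \<bullet> g i))\<^sup>2)"
    and minimal: "\<forall>M. skew_red n M \<longrightarrow>
        oi_obj n ns (\<lambda>a i. u a \<bullet> y i) (\<lambda>b i. u b \<bullet> g i) Lh
        \<le> oi_obj n ns (\<lambda>a i. u a \<bullet> y i) (\<lambda>b i. u b \<bullet> g i) M"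
    and residual: "\<And>i. i < ns \<Longrightarrow> norm (y i - L *v g i) \<le> r"
  shows "c * (frob n (\<lambda>a b. Lh a b - u a \<bullet> (L *v u b)))\<^sup>2 \<le> 4 * real ns * r\<^sup>2"
proof -
  let ?obj = "oi_obj n ns (\<lambda>a i. u a \<bullet> y i) (\<lambda>b i. u b \<bullet> g i)"
  have "c * (frob n (\<lambda>a b. Lh a b - u a \<bullet> (L *v u b)))\<^sup>2 \<le> 4 * ?obj (\<lambda>a b. u a \<bullet> (L *v u b))"
    using coercive minimal skew_red_projected[OF skew] by (intro frob_le_oi_obj_of_better_fit) auto
  also have "?obj (\<lambda>a b. u a \<bullet> (L *v u b)) = (\<Sum>i<ns. (norm (y i - L *v g i))\<^sup>2)"
    using oi_obj_projected_operator[OF orth _ expand] by simp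
  also have "\<dots> \<le> real ns * r\<^sup>2"
    using sum_bounded_above[of "{..<ns}" "\<lambda>i. (norm (y i - L *v g i))\<^sup>2" "r\<^sup>2"] residual
    by (simp add: power_mono)
  finally show ?thesis by simp
qed

lemma eq_zero_if_small_near_end:
  fixes f :: "nat \<Rightarrow> 'a::real_normed_vector"
  assumes "\<And>e. 0 < e \<Longrightarrow> \<exists>n0\<le>N. \<forall>n. n0 \<le> n \<and> n \<le> N \<longrightarrow> norm (f n) < e"
  shows "f N = 0"
proof -
  have "norm (f N) < e" if "0 < e" for e
    using assms[OF that] by auto
  then show ?thesis
    by (metis less_irrefl norm_eq_zero norm_ge_zero order_le_less)
qed

lemma tendsto_zero_if_sq_le:
  fixes f g :: "'a \<Rightarrow> real"
  assumes "(g \<longlongrightarrow> 0) F" and "c > 0" and "\<forall>\<^sub>F x in F. c * (f x)\<^sup>2 \<le> K * (g x)\<^sup>2"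
  shows "(f \<longlongrightarrow> 0) F"
proof (rule Lim_null_comparison)
  have norm_le: "norm (f x) \<le> sqrt (K / c) * norm (g x)" if "c * (f x)\<^sup>2 \<le> K * (g x)\<^sup>2" for x
  proof -
    have "(f x)\<^sup>2 \<le> K / c * (g x)\<^sup>2"
      using that \<open>c > 0\<close> by (simp add: field_simps)
    then have "sqrt ((f x)\<^sup>2) \<le> sqrt (K / c * (g x)\<^sup>2)"
      by (rule real_sqrt_le_mono)
    then show ?thesis by (simp only: real_sqrt_mult real_sqrt_abs real_norm_def)
  qed
  show "\<forall>\<^sub>F x in F. norm (f x) \<le> sqrt (K / c) * norm (g x)"
    using assms(3) norm_le by (rule eventually_mono)
  show "((\<lambda>x. sqrt (K / c) * norm (g x)) \<longlongrightarrow> 0) F"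
    using tendsto_mult_right_zero[OF tendsto_norm_zero[OF assms(1)]] by simp
qed

theorem theorem2:
  fixes H :: "real^'N \<Rightarrow> real" and gradH :: "real^'N \<Rightarrow> real^'N"
    and L :: "real^'N^'N"
    and x :: "real \<Rightarrow> real^'N"
    and ns :: nat and t :: "nat \<Rightarrow> real"
    and xt :: "real \<Rightarrow> nat \<Rightarrow> real^'N"
    and S :: "nat \<Rightarrow> real^'N"
    and U :: "nat \<Rightarrow> nat \<Rightarrow> real^'N"
    and Lhat :: "real \<Rightarrow> nat \<Rightarrow> nat \<Rightarrow> nat \<Rightarrow> real"
  assumes grad: "\<And>y. (H has_derivative (\<lambda>v. gradH y \<bullet> v)) (at y)"
    and skew: "skew_mat L"
    and sol: "\<And>\<tau>. (x has_vector_derivative (L *v gradH (x \<tau>))) (at \<tau>)"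
    and snap: "S = (\<lambda>i. x (t i)) \<or> S = center ns (\<lambda>i. x (t i))"
    and pod: "\<And>n. n \<le> CARD('N) \<Longrightarrow> pod_basis ns S n (U n)"
    and inferred: "\<And>h n. 0 < h \<Longrightarrow> n \<le> CARD('N) \<Longrightarrow>
        skew_red n (Lhat h n) \<and>
        (\<forall>M. skew_red n M \<longrightarrow>
           oi_obj n ns (\<lambda>a i. U n a \<bullet> xt h i) (\<lambda>b i. U n b \<bullet> gradH (x (t i))) (Lhat h n)
           \<le> oi_obj n ns (\<lambda>a i. U n a \<bullet> xt h i) (\<lambda>b i. U n b \<bullet> gradH (x (t i))) M)"
    and basis_conv: "\<And>y e. 0 < e \<Longrightarrow> \<exists>n0\<le>CARD('N). \<forall>n. n0 \<le> n \<and> n \<le> CARD('N) \<longrightarrow>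
        norm (y - (\<Sum>j<n. (U n j \<bullet> y) *\<^sub>R U n j)) < e"
    and deriv_conv: "((\<lambda>h. Max ((\<lambda>i. norm (xt h i - vector_derivative x (at (t i)))) ` {..<ns}))
                       \<longlongrightarrow> 0) (at_right 0)"
    and rankX: "dim (span ((\<lambda>i. x (t i)) ` {..<ns})) = CARD('N)"
    and rankG: "dim (span ((\<lambda>i. gradH (x (t i))) ` {..<ns})) = CARD('N)"
  shows "\<forall>e>0. \<exists>\<delta>>0. \<exists>n0\<le>CARD('N). \<forall>h n. 0 < h \<and> h < \<delta> \<and> n0 \<le> n \<and> n \<le> CARD('N) \<longrightarrow>
           frob n (\<lambda>a b. Lhat h n a b - U n a \<bullet> (L *v U n b)) < e"
proof -
  define N where "N = CARD('N)"
  define u where "u = U N"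
  define g where "g i = gradH (x (t i))" for i
  define m where "m = (\<lambda>h. Max ((\<lambda>i. norm (xt h i - vector_derivative x (at (t i)))) ` {..<ns}))"
  have orth: "orthonormal_upto N u"
    using pod[of N] unfolding u_def N_def pod_basis_def orthonormal_upto_def by auto
  have expand: "(\<Sum>j<N. (u j \<bullet> y) *\<^sub>R u j) = y" for y
    using eq_zero_if_small_near_end[of N "\<lambda>n. y - (\<Sum>j<n. (U n j \<bullet> y) *\<^sub>R U n j)"] basis_conv
    unfolding u_def N_def by simp
  have "dim (g ` {..<ns}) = DIM(real^'N)"
    using rankG by (simp add: g_def dim_span)
  then obtain c where c: "c > 0"
    "\<And>d. c * (\<Sum>b<N. (d b)\<^sup>2) \<le> (\<Sum>i<ns. (\<Sum>b<N. d b * (u b \<bullet> g i))\<^sup>2)"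
    using orthonormal_coords_coercive[OF orth] dim_eq_full by blast
  have residual: "norm (xt h i - L *v g i) \<le> m h" if "i < ns" for h i
    unfolding m_def g_def vector_derivative_at[OF sol, symmetric] using that by (intro Max_ge) auto
  have bound: "c * (frob N (\<lambda>a b. Lhat h N a b - u a \<bullet> (L *v u b)))\<^sup>2 \<le> 4 * real ns * (m h)\<^sup>2"
    if "0 < h" for h
    using inferred[OF that, of N] residual unfolding u_def g_def N_def
    by (intro oi_error_le_residuals[OF orth expand skew c(2), unfolded u_def g_def N_def]) auto
  have "(m \<longlongrightarrow> 0) (at_right 0)"
    using deriv_conv unfolding m_def .
  then have lim: "((\<lambda>h. frob N (\<lambda>a b. Lhat h N a b - u a \<bullet> (L *v u b))) \<longlongrightarrow> 0) (at_right 0)"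
    by (rule tendsto_zero_if_sq_le[OF _ c(1) eventually_mono[OF eventually_at_right_less bound]])
  show ?thesis
  proof (intro allI impI)
    fix e :: real assume "e > 0"
    then obtain \<delta> where "\<delta> > 0"
      and small: "\<And>h. 0 < h \<Longrightarrow> h < \<delta> \<Longrightarrow> frob N (\<lambda>a b. Lhat h N a b - u a \<bullet> (L *v u b)) < e"
      using order_tendstoD(2)[OF lim] unfolding eventually_at_right_field by blast
    have "n = N" if "N \<le> n" "n \<le> CARD('N)" for n
      using that unfolding N_def by simp
    then show "\<exists>\<delta>>0. \<exists>n0\<le>CARD('N). \<forall>h n. 0 < h \<and> h < \<delta> \<and> n0 \<le> n \<and> n \<le> CARD('N) \<longrightarrow>
        frob n (\<lambda>a b. Lhat h n a b - U n a \<bullet> (L *v U n b)) < e"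
      using \<open>\<delta> > 0\<close> small unfolding u_def by (intro exI[of _ \<delta>] conjI exI[of _ N]) (auto simp: N_def)
  qed
qed

end
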